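(* Let $X\in\mathbb R^{n\times p}$ be fixed and let $\mathbf y\in\mathbb R^n$ be a random vector with independent components satisfying, for some $\sigma\ge0$, $\mathbb E\,e^{t(\mathbf y_i-\mathbb E\mathbf y_i)}\le e^{\sigma^2t^2/2}$ for all $i$ and $t\in\mathbb R$. Let $\mathrm{cl}$ be a coding length with coding complexity $c(\cdot)$, and let $\eta\in(0,1)$. Then with probability $1-\eta$, for all $\beta\in\mathbb R^p$ and all $a>0$, \[ \|X\beta-\mathbb E\mathbf y\|_2^2\le(1+a)\left[\|X\beta-\mathbf y\|_2^2-\|\mathbf y-\mathbb E\mathbf y\|_2^2\right]+(2+a+1/a)\sigma^2\left[7.4c(\beta)+4.7\ln(4/\eta)\right]. \]
   Context: Let $\mathcal I=\{1,\ldots,p\}$ and $\mathrm{supp}(\beta)=\{j:\beta_j\ne0\}$. A function $\mathrm{cl}$ from subsets of $\mathcal I$ to $[0,\infty]$ is a coding length if $\sum_{F\subset\mathcal I,\,F\ne\emptyset}2^{-\mathrm{cl}(F)}\le1$, with $\mathrm{cl}(\emptyset)=0$. The coding complexity is $c(F)=|F|+\mathrm{cl}(F)$ for $F\subset\mathcal I$, and $c(\beta)=\min\{c(F):\mathrm{supp}(\beta)\subset F\}$ for $\beta\in\mathbb R^p$. *)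

theory Defs
  imports "HOL-Probability.Probability"
begin

text \<open>Support of a vector indexed by the finite type 'p (playing the role of I = {1..p}).\<close>
definition supp :: "real ^ 'p \<Rightarrow> 'p set" where
  "supp \<beta> = {j. \<beta> $ j \<noteq> 0}"

definition pow2_neg :: "ereal \<Rightarrow> real" where
  "pow2_neg x = (if x = \<infinity> then 0 else 2 powr (- real_of_ereal x))"

definition coding_length :: "('p::finite set \<Rightarrow> ereal) \<Rightarrow> bool" where
  "coding_length cl \<longleftrightarrow> (\<forall>F. 0 \<le> cl F) \<and> cl {} = 0 \<and>
     (\<Sum>F\<in>{F::'p set. F \<noteq> {}}. pow2_neg (cl F)) \<le> 1"

definition coding_complexity_set :: "('p::finite set \<Rightarrow> ereal) \<Rightarrow> 'p set \<Rightarrow> ereal" where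
  "coding_complexity_set cl F = ereal (real (card F)) + cl F"

definition coding_complexity :: "('p::finite set \<Rightarrow> ereal) \<Rightarrow> real ^ 'p \<Rightarrow> ereal" where
  "coding_complexity cl \<beta> = (INF F\<in>{F. supp \<beta> \<subseteq> F}. coding_complexity_set cl F)"

end

theory Submission
  imports Defs
begin

text \<open>Write \<open>\<mu> = E y\<close> and \<open>e = y - \<mu>\<close>. If \<open>supp \<beta> \<subseteq> F\<close>, then \<open>u = X\<beta> - \<mu>\<close> lies in the span
  \<open>S\<^sub>F\<close> of the columns of \<open>X\<close> indexed by \<open>F\<close> together with \<open>\<mu>\<close>, a space of dimension at most
  \<open>|F| + 1\<close>. Hence \<open>\<langle>u, e\<rangle> \<le> \<parallel>u\<parallel> \<parallel>P\<^sub>F e\<parallel>\<close>, and completing the square turns the expansion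
  \<open>\<parallel>X\<beta> - y\<parallel>\<^sup>2 - \<parallel>y - \<mu>\<parallel>\<^sup>2 = \<parallel>u\<parallel>\<^sup>2 - 2\<langle>u, e\<rangle>\<close> into the claimed inequality with
  \<open>\<parallel>P\<^sub>F e\<parallel>\<^sup>2\<close> in place of \<open>\<sigma>\<^sup>2 [7.4 c(F) + 4.7 ln (4/\<eta>)]\<close>.
  A Chernoff bound gives \<open>P(\<parallel>P\<^sub>F e\<parallel>\<^sup>2 > \<sigma>\<^sup>2 x) \<le> \<surd>2\<^bsup>dim S\<^sub>F\<^esup> e\<^bsup>-x/4\<^esup>\<close>; the exponential moment
  of the quadratic form \<open>\<parallel>P\<^sub>F e\<parallel>\<^sup>2\<close> is controlled by linearising it with an independent
  standard Gaussian vector. A union bound over all \<open>F\<close>, weighted by the Kraft inequality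
  \<open>\<Sum> 2\<^bsup>-cl(F)\<^esup> \<le> 1\<close>, finishes the proof.\<close>

abbreviation std_normal :: "real measure" where
  "std_normal \<equiv> density lborel std_normal_density"

lemma nn_integral_normal_density: "0 < s \<Longrightarrow> (\<integral>\<^sup>+x. ennreal (normal_density m s x) \<partial>lborel) = 1"
  by (subst nn_integral_eq_integral) auto

lemma std_normal_nn_integral_exp_linear:
  "(\<integral>\<^sup>+g. ennreal (exp (t * g)) \<partial>std_normal) = ennreal (exp (t\<^sup>2 / 2))"
proof -
  have shift: "std_normal_density x * exp (t * x) = exp (t\<^sup>2 / 2) * normal_density t 1 x" for x
  proof -
    have "exp (- x\<^sup>2 / 2) * exp (t * x) = exp (t\<^sup>2 / 2) * exp (- (x - t)\<^sup>2 / 2)"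
      by (simp add: exp_add[symmetric] power2_eq_square field_simps)
    then show ?thesis unfolding std_normal_density_def normal_density_def by simp
  qed
  have "(\<integral>\<^sup>+g. ennreal (exp (t * g)) \<partial>std_normal)
      = (\<integral>\<^sup>+x. ennreal (exp (t\<^sup>2 / 2)) * ennreal (normal_density t 1 x) \<partial>lborel)"
    by (subst nn_integral_density) (auto intro!: nn_integral_cong simp: shift[symmetric] ennreal_mult'[symmetric])
  also have "\<dots> = ennreal (exp (t\<^sup>2 / 2))"
    by (subst nn_integral_cmult) (auto simp: nn_integral_normal_density)
  finally show ?thesis .
qed

lemma std_normal_nn_integral_exp_square_le:
  assumes "0 \<le> c" "c \<le> 1/4"
  shows "(\<integral>\<^sup>+g. ennreal (exp (c * g\<^sup>2)) \<partial>std_normal) \<le> ennreal (sqrt 2)"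
proof -
  have widen: "std_normal_density x * exp (x\<^sup>2 / 4) = sqrt 2 * normal_density 0 (sqrt 2) x" for x
  proof -
    have "exp (- x\<^sup>2 / 2) * exp (x\<^sup>2 / 4) = exp (- x\<^sup>2 / 4)"
      by (simp add: exp_add[symmetric] field_simps)
    moreover have "sqrt (2 * pi * 2) = sqrt 2 * sqrt (2 * pi)"
      by (simp add: real_sqrt_mult[symmetric] mult_ac)
    ultimately show ?thesis unfolding std_normal_density_def normal_density_def
      by (simp add: field_simps)
  qed
  have "c * x\<^sup>2 \<le> x\<^sup>2 / 4" for x :: real
    using mult_right_mono[OF assms(2), of "x\<^sup>2"] by simp
  then have "(\<integral>\<^sup>+g. ennreal (exp (c * g\<^sup>2)) \<partial>std_normal) \<le> (\<integral>\<^sup>+g. ennreal (exp (g\<^sup>2 / 4)) \<partial>std_normal)"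
    by (intro nn_integral_mono ennreal_leI) simp
  also have "\<dots> = (\<integral>\<^sup>+x. ennreal (sqrt 2) * ennreal (normal_density 0 (sqrt 2) x) \<partial>lborel)"
    by (subst nn_integral_density) (auto intro!: nn_integral_cong simp: widen[symmetric] ennreal_mult'[symmetric])
  also have "\<dots> = ennreal (sqrt 2)"
    by (subst nn_integral_cmult) (auto simp: nn_integral_normal_density)
  finally show ?thesis .
qed

lemma product_sigma_finite_std_normal: "product_sigma_finite (\<lambda>_. std_normal)"
  unfolding product_sigma_finite_def
  using prob_space_imp_sigma_finite[OF prob_space_normal_density[of 1 0]] by simp

lemma prob_space_PiM_std_normal: "prob_space (PiM B (\<lambda>_. std_normal))"
  by (intro prob_space_PiM prob_space_normal_density) simp

lemma ennreal_exp_sum_power2_eq_nn_integral_PiM_std_normal: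
  fixes q :: "'b \<Rightarrow> real"
  assumes "finite B" "0 \<le> s"
  shows "ennreal (exp (s * (\<Sum>w\<in>B. (q w)\<^sup>2) / 2))
    = (\<integral>\<^sup>+g. (\<Prod>w\<in>B. ennreal (exp (sqrt s * q w * g w))) \<partial>PiM B (\<lambda>_. std_normal))"
proof -
  interpret product_sigma_finite "\<lambda>_. std_normal"
    by (rule product_sigma_finite_std_normal)
  have "s * (\<Sum>w\<in>B. (q w)\<^sup>2) / 2 = (\<Sum>w\<in>B. (sqrt s * q w)\<^sup>2 / 2)"
    using assms(2) by (simp add: sum_distrib_left sum_divide_distrib power_mult_distrib)
  then have "ennreal (exp (s * (\<Sum>w\<in>B. (q w)\<^sup>2) / 2))
      = (\<Prod>w\<in>B. \<integral>\<^sup>+g. ennreal (exp (sqrt s * q w * g)) \<partial>std_normal)"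
    by (simp add: exp_sum assms(1) prod_ennreal std_normal_nn_integral_exp_linear)
  also have "\<dots> = (\<integral>\<^sup>+g. (\<Prod>w\<in>B. ennreal (exp (sqrt s * q w * g w))) \<partial>PiM B (\<lambda>_. std_normal))"
    by (rule product_nn_integral_prod[symmetric]) (auto simp: assms(1))
  finally show ?thesis .
qed

lemma PiM_std_normal_nn_integral_exp_sum_power2_le:
  assumes "finite B" "0 \<le> c" "c \<le> 1/4"
  shows "(\<integral>\<^sup>+g. (\<Prod>w\<in>B. ennreal (exp (c * (g w)\<^sup>2))) \<partial>PiM B (\<lambda>_. std_normal)) \<le> ennreal (sqrt 2 ^ card B)"
proof -
  interpret product_sigma_finite "\<lambda>_. std_normal"
    by (rule product_sigma_finite_std_normal)
  have "(\<integral>\<^sup>+g. (\<Prod>w\<in>B. ennreal (exp (c * (g w)\<^sup>2))) \<partial>PiM B (\<lambda>_. std_normal))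
      = (\<Prod>w\<in>B. \<integral>\<^sup>+g. ennreal (exp (c * g\<^sup>2)) \<partial>std_normal)"
    by (rule product_nn_integral_prod) (auto simp: assms(1))
  also have "\<dots> \<le> (\<Prod>w\<in>B. ennreal (sqrt 2))"
    using assms by (intro prod_mono_ennreal std_normal_nn_integral_exp_square_le) auto
  also have "\<dots> = ennreal (sqrt 2 ^ card B)"
    by (simp add: ennreal_power)
  finally show ?thesis .
qed

lemma norm_sum_orthonormal_power2:
  fixes B :: "'a::real_inner set"
  assumes "finite B" "pairwise orthogonal B" "\<And>w. w \<in> B \<Longrightarrow> norm w = 1"
  shows "(norm (\<Sum>w\<in>B. c w *\<^sub>R w))\<^sup>2 = (\<Sum>w\<in>B. (c w)\<^sup>2)"
proof -
  have "pairwise (\<lambda>i j. orthogonal (c i *\<^sub>R i) (c j *\<^sub>R j)) B"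
    by (rule pairwise_ortho_scaleR) (use assms(2) in simp)
  then have "(norm (\<Sum>w\<in>B. c w *\<^sub>R w))\<^sup>2 = (\<Sum>w\<in>B. (norm (c w *\<^sub>R w))\<^sup>2)"
    by (rule norm_sum_Pythagorean[OF assms(1)])
  also have "\<dots> = (\<Sum>w\<in>B. (c w)\<^sup>2)"
    using assms(3) by (intro sum.cong) (auto simp: power2_eq_square)
  finally show ?thesis .
qed

lemma inner_le_norm_mult_sqrt_sum_inner_power2:
  fixes B :: "'a::real_inner set"
  assumes B: "finite B" "pairwise orthogonal B" "\<And>w. w \<in> B \<Longrightarrow> norm w = 1"
    and u: "u \<in> span B"
  shows "u \<bullet> x \<le> norm u * sqrt (\<Sum>w\<in>B. (w \<bullet> x)\<^sup>2)"
proof -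
  define p where "p = (\<Sum>w\<in>B. (w \<bullet> x) *\<^sub>R w)"
  have "p \<bullet> w = w \<bullet> x" if w: "w \<in> B" for w
  proof -
    have "p \<bullet> w = (\<Sum>w'\<in>B. (w' \<bullet> x) * (w' \<bullet> w))"
      by (simp add: p_def inner_sum_left)
    also have "\<dots> = (w \<bullet> x) * (w \<bullet> w) + (\<Sum>w'\<in>B - {w}. (w' \<bullet> x) * (w' \<bullet> w))"
      using B(1) w by (simp add: sum.remove)
    also have "(\<Sum>w'\<in>B - {w}. (w' \<bullet> x) * (w' \<bullet> w)) = 0"
      using B(2) w by (intro sum.neutral) (auto simp: pairwise_def orthogonal_def)
    finally show ?thesis
      using B(3)[OF w] by (simp add: dot_square_norm)
  qed
  then have "orthogonal (x - p) w" if "w \<in> B" for w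
    using that by (simp add: orthogonal_def inner_diff_left inner_commute[of x])
  then have "orthogonal (x - p) u"
    by (rule orthogonal_to_span[OF u])
  then have "u \<bullet> x = u \<bullet> p"
    by (simp add: orthogonal_def inner_diff_left inner_diff_right inner_commute)
  also have "\<dots> \<le> norm u * norm p"
    by (rule norm_cauchy_schwarz)
  also have "norm p = sqrt (\<Sum>w\<in>B. (w \<bullet> x)\<^sup>2)"
    using norm_sum_orthonormal_power2[OF B, of "\<lambda>w. w \<bullet> x"]
    unfolding p_def by (metis norm_ge_zero real_sqrt_unique)
  finally show ?thesis .
qed

locale subgaussian_vector = prob_space +
  fixes e :: "'a \<Rightarrow> real ^ 'n" and \<sigma> :: real
  assumes indep_components: "indep_vars (\<lambda>_. borel) (\<lambda>i \<omega>. e \<omega> $ i) UNIV"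
    and nn_integral_exp_component_le:
      "\<And>i t. (\<integral>\<^sup>+\<omega>. ennreal (exp (t * e \<omega> $ i)) \<partial>M) \<le> ennreal (exp (\<sigma>\<^sup>2 * t\<^sup>2 / 2))"
begin

lemma borel_measurable_component[measurable]: "(\<lambda>\<omega>. e \<omega> $ i) \<in> borel_measurable M"
  using indep_components unfolding indep_vars_def by auto

lemma borel_measurable_inner[measurable]: "(\<lambda>\<omega>. w \<bullet> e \<omega>) \<in> borel_measurable M"
  unfolding inner_vec_def by measurable

lemma nn_integral_exp_linear_form_le:
  "(\<integral>\<^sup>+\<omega>. ennreal (exp (v \<bullet> e \<omega>)) \<partial>M) \<le> ennreal (exp (\<sigma>\<^sup>2 * (norm v)\<^sup>2 / 2))"
proof -
  have "(\<integral>\<^sup>+\<omega>. ennreal (exp (v \<bullet> e \<omega>)) \<partial>M) = (\<integral>\<^sup>+\<omega>. (\<Prod>i\<in>UNIV. ennreal (exp (v $ i * e \<omega> $ i))) \<partial>M)"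
    by (simp add: inner_vec_def exp_sum prod_ennreal)
  also have "\<dots> = (\<Prod>i\<in>UNIV. \<integral>\<^sup>+\<omega>. ennreal (exp (v $ i * e \<omega> $ i)) \<partial>M)"
    by (rule indep_vars_nn_integral) (auto intro!: indep_vars_compose2[OF indep_components])
  also have "\<dots> \<le> (\<Prod>i\<in>UNIV. ennreal (exp (\<sigma>\<^sup>2 * (v $ i)\<^sup>2 / 2)))"
    by (intro prod_mono_ennreal nn_integral_exp_component_le)
  also have "\<dots> = ennreal (exp (\<sigma>\<^sup>2 * (\<Sum>i\<in>UNIV. (v $ i)\<^sup>2) / 2))"
    by (simp add: prod_ennreal exp_sum[symmetric] sum_distrib_left sum_divide_distrib)
  also have "(\<Sum>i\<in>UNIV. (v $ i)\<^sup>2) = (norm v)\<^sup>2"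
    unfolding power2_norm_eq_inner inner_vec_def by (simp add: power2_eq_square)
  finally show ?thesis .
qed

text \<open>The quadratic form is linearised through \<open>e\<^bsup>q\<^sup>2/2\<^esup> = E e\<^bsup>q g\<^esup>\<close> for standard Gaussians \<open>g\<^sub>w\<close>,
  one per \<open>w \<in> B\<close>; after Fubini the sub-Gaussian bound applies to the linear form
  \<open>\<langle>\<surd>s \<Sum> g\<^sub>w w, e\<rangle>\<close>, whose coefficient vector has squared norm \<open>s \<Sum> g\<^sub>w\<^sup>2\<close>.\<close>

lemma nn_integral_exp_sum_inner_power2_le:
  fixes B :: "(real ^ 'n) set"
  assumes B: "finite B" "pairwise orthogonal B" "\<And>w. w \<in> B \<Longrightarrow> norm w = 1"
    and s: "0 \<le> s" "s * \<sigma>\<^sup>2 \<le> 1/2"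
  shows "(\<integral>\<^sup>+\<omega>. ennreal (exp (s * (\<Sum>w\<in>B. (w \<bullet> e \<omega>)\<^sup>2) / 2)) \<partial>M) \<le> ennreal (sqrt 2 ^ card B)"
proof -
  let ?G = "PiM B (\<lambda>_. std_normal)"
  interpret GM: pair_sigma_finite ?G M
    unfolding pair_sigma_finite_def
    using prob_space_imp_sigma_finite[OF prob_space_PiM_std_normal] prob_space_imp_sigma_finite[OF prob_space_axioms]
    by blast
  define f where "f g \<omega> = (\<Prod>w\<in>B. ennreal (exp (sqrt s * (w \<bullet> e \<omega>) * g w)))" for g \<omega>
  have sub_gaussian: "(\<integral>\<^sup>+\<omega>. f g \<omega> \<partial>M) \<le> (\<Prod>w\<in>B. ennreal (exp ((\<sigma>\<^sup>2 * s / 2) * (g w)\<^sup>2)))" for g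
  proof -
    define v where "v = (\<Sum>w\<in>B. (sqrt s * g w) *\<^sub>R w)"
    have "f g \<omega> = ennreal (exp (v \<bullet> e \<omega>))" for \<omega>
      by (simp add: f_def v_def inner_sum_left exp_sum B(1) prod_ennreal mult_ac)
    then have "(\<integral>\<^sup>+\<omega>. f g \<omega> \<partial>M) \<le> ennreal (exp (\<sigma>\<^sup>2 * (norm v)\<^sup>2 / 2))"
      using nn_integral_exp_linear_form_le by simp
    also have "(norm v)\<^sup>2 = s * (\<Sum>w\<in>B. (g w)\<^sup>2)"
      using s by (simp add: v_def norm_sum_orthonormal_power2[OF B] sum_distrib_left power_mult_distrib)
    finally show ?thesis
      by (simp add: prod_ennreal exp_sum[symmetric] B(1) sum_distrib_left sum_divide_distrib mult_ac)
  qed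
  have "(\<integral>\<^sup>+\<omega>. ennreal (exp (s * (\<Sum>w\<in>B. (w \<bullet> e \<omega>)\<^sup>2) / 2)) \<partial>M) = (\<integral>\<^sup>+\<omega>. (\<integral>\<^sup>+g. f g \<omega> \<partial>?G) \<partial>M)"
    unfolding f_def using B(1) s(1) by (simp add: ennreal_exp_sum_power2_eq_nn_integral_PiM_std_normal)
  also have "\<dots> = (\<integral>\<^sup>+g. (\<integral>\<^sup>+\<omega>. f g \<omega> \<partial>M) \<partial>?G)"
    by (rule GM.Fubini') (unfold f_def, measurable)
  also have "\<dots> \<le> (\<integral>\<^sup>+g. (\<Prod>w\<in>B. ennreal (exp ((\<sigma>\<^sup>2 * s / 2) * (g w)\<^sup>2))) \<partial>?G)"
    by (intro nn_integral_mono sub_gaussian)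
  also have "\<dots> \<le> ennreal (sqrt 2 ^ card B)"
    using B(1) s by (intro PiM_std_normal_nn_integral_exp_sum_power2_le) (auto simp: mult_ac)
  finally show ?thesis .
qed

lemma emeasure_sum_inner_power2_gt_le:
  fixes B :: "(real ^ 'n) set"
  assumes B: "finite B" "pairwise orthogonal B" "\<And>w. w \<in> B \<Longrightarrow> norm w = 1"
    and "\<sigma> \<noteq> 0"
  shows "emeasure M {\<omega>\<in>space M. \<sigma>\<^sup>2 * x < (\<Sum>w\<in>B. (w \<bullet> e \<omega>)\<^sup>2)} \<le> ennreal (sqrt 2 ^ card B * exp (- x / 4))"
proof -
  define s where "s = 1 / (2 * \<sigma>\<^sup>2)"
  have s: "0 \<le> s" "s * \<sigma>\<^sup>2 \<le> 1/2"
    using \<open>\<sigma> \<noteq> 0\<close> by (auto simp: s_def)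
  define Q where "Q \<omega> = (\<Sum>w\<in>B. (w \<bullet> e \<omega>)\<^sup>2)" for \<omega>
  let ?A = "{\<omega>\<in>space M. \<sigma>\<^sup>2 * x < Q \<omega>}"
  have markov: "indicator ?A \<omega> \<le> ennreal (exp (s * Q \<omega> / 2)) * ennreal (exp (- x / 4))" for \<omega>
  proof (cases "\<omega> \<in> ?A")
    case True
    then have "0 \<le> s * Q \<omega> / 2 + (- x / 4)"
      using \<open>\<sigma> \<noteq> 0\<close> by (simp add: s_def field_simps)
    then have "1 \<le> exp (s * Q \<omega> / 2) * exp (- x / 4)"
      by (simp add: exp_add[symmetric])
    then show ?thesis
      using True by (simp add: ennreal_mult'[symmetric] ennreal_mult''[symmetric])
  qed simp
  have "emeasure M ?A = (\<integral>\<^sup>+\<omega>. indicator ?A \<omega> \<partial>M)"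
    by (simp add: Q_def)
  also have "\<dots> \<le> (\<integral>\<^sup>+\<omega>. ennreal (exp (s * Q \<omega> / 2)) * ennreal (exp (- x / 4)) \<partial>M)"
    by (intro nn_integral_mono markov)
  also have "\<dots> = (\<integral>\<^sup>+\<omega>. ennreal (exp (s * Q \<omega> / 2)) \<partial>M) * ennreal (exp (- x / 4))"
    by (rule nn_integral_multc) (simp add: Q_def)
  also have "\<dots> \<le> ennreal (sqrt 2 ^ card B) * ennreal (exp (- x / 4))"
    unfolding Q_def by (intro mult_right_mono nn_integral_exp_sum_inner_power2_le[OF B s]) auto
  finally show ?thesis
    by (simp add: Q_def ennreal_mult[symmetric])
qed

text \<open>For \<open>\<sigma> = 0\<close> the exponential moment bound holds for every \<open>s \<ge> 0\<close>, so \<open>E Q \<le> 2 \<surd>2\<^bsup>|B|\<^esup>/s\<close>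
  for all \<open>s\<close>.\<close>

lemma AE_sum_inner_power2_eq_0:
  fixes B :: "(real ^ 'n) set"
  assumes B: "finite B" "pairwise orthogonal B" "\<And>w. w \<in> B \<Longrightarrow> norm w = 1"
    and "\<sigma> = 0"
  shows "AE \<omega> in M. (\<Sum>w\<in>B. (w \<bullet> e \<omega>)\<^sup>2) = 0"
proof -
  define Q where "Q \<omega> = (\<Sum>w\<in>B. (w \<bullet> e \<omega>)\<^sup>2)" for \<omega>
  have Q_nonneg: "0 \<le> Q \<omega>" for \<omega>
    unfolding Q_def by (intro sum_nonneg) auto
  define C where "C = sqrt 2 ^ card B"
  have "(\<integral>\<^sup>+\<omega>. ennreal (Q \<omega>) \<partial>M) \<le> 0 + ennreal d" if "0 < d" for d :: real
  proof -
    define s where "s = 2 * C / d"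
    have "0 < s"
      using \<open>0 < d\<close> by (simp add: s_def C_def)
    have "Q \<omega> \<le> exp (s * Q \<omega> / 2) * (2 / s)" for \<omega>
      using exp_ge_add_one_self[of "s * Q \<omega> / 2"] Q_nonneg[of \<omega>] \<open>0 < s\<close> by (simp add: field_simps)
    then have "(\<integral>\<^sup>+\<omega>. ennreal (Q \<omega>) \<partial>M) \<le> (\<integral>\<^sup>+\<omega>. ennreal (exp (s * Q \<omega> / 2)) \<partial>M) * ennreal (2 / s)"
      using \<open>0 < s\<close> by (subst nn_integral_multc[symmetric])
        (auto intro!: nn_integral_mono simp: Q_def ennreal_mult[symmetric])
    also have "\<dots> \<le> ennreal C * ennreal (2 / s)"
      unfolding Q_def C_def using \<open>0 < s\<close> \<open>\<sigma> = 0\<close>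
      by (intro mult_right_mono nn_integral_exp_sum_inner_power2_le[OF B]) auto
    also have "\<dots> = ennreal d"
      using \<open>0 < d\<close> \<open>0 < s\<close> by (simp add: ennreal_mult[symmetric] s_def C_def)
    finally show ?thesis by simp
  qed
  then have "(\<integral>\<^sup>+\<omega>. ennreal (Q \<omega>) \<partial>M) = 0"
    using ennreal_le_epsilon by (metis le_zero_eq)
  then have "AE \<omega> in M. ennreal (Q \<omega>) = 0"
    by (subst (asm) nn_integral_0_iff_AE) (auto simp: Q_def)
  then show ?thesis
    by eventually_elim (use Q_nonneg in \<open>auto simp: Q_def\<close>)
qed

end

lemma power2_le_of_le_mult:
  fixes a n r t :: real
  assumes "0 < a" "0 \<le> n" "0 \<le> r" "t \<le> n * r"
  shows "n\<^sup>2 \<le> (1 + a) * (n\<^sup>2 - 2 * t) + (2 + a + 1 / a) * r\<^sup>2"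
proof -
  have "(1 + a) * (n\<^sup>2 - 2 * t) + (2 + a + 1 / a) * r\<^sup>2 - n\<^sup>2
      = (a * n - (1 + a) * r)\<^sup>2 / a + 2 * (1 + a) * (n * r - t)"
    using assms by (simp add: field_simps power2_eq_square)
  moreover have "0 \<le> (a * n - (1 + a) * r)\<^sup>2 / a + 2 * (1 + a) * (n * r - t)"
    using assms by simp
  ultimately show ?thesis by linarith
qed

lemma norm_power2_le_excess_risk:
  fixes B :: "'a::real_inner set"
  assumes B: "finite B" "pairwise orthogonal B" "\<And>w. w \<in> B \<Longrightarrow> norm w = 1"
    and "u \<in> span B" "0 < a"
  shows "(norm u)\<^sup>2 \<le> (1 + a) * ((norm (u - e))\<^sup>2 - (norm e)\<^sup>2) + (2 + a + 1 / a) * (\<Sum>w\<in>B. (w \<bullet> e)\<^sup>2)"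
proof -
  have "0 \<le> (\<Sum>w\<in>B. (w \<bullet> e)\<^sup>2)"
    by (intro sum_nonneg) auto
  moreover have "(norm (u - e))\<^sup>2 - (norm e)\<^sup>2 = (norm u)\<^sup>2 - 2 * (u \<bullet> e)"
    unfolding power2_norm_eq_inner by (simp add: inner_diff_left inner_diff_right inner_commute)
  ultimately show ?thesis
    using power2_le_of_le_mult[OF \<open>0 < a\<close> norm_ge_zero real_sqrt_ge_zero
        inner_le_norm_mult_sqrt_sum_inner_power2[OF B \<open>u \<in> span B\<close>]]
    by simp
qed

text \<open>The constants of the theorem enter here: \<open>7.4/4 \<ge> ln 2\<close> absorbs both \<open>\<surd>2\<^sup>k\<close> and \<open>2\<^bsup>-c\<^esup>\<close>,
  and \<open>4.7/4 \<ge> 1\<close> turns \<open>ln (4/\<eta>)\<close> into the factor \<open>\<eta>/4\<close>.\<close>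

lemma sqrt2_power_mult_exp_le:
  fixes k :: nat and c \<eta> :: real
  assumes "0 \<le> c" "0 < \<eta>" "\<eta> < 1"
  shows "sqrt 2 ^ (k + 1) * exp (- (7.4 * (real k + c) + 4.7 * ln (4 / \<eta>)) / 4)
    \<le> sqrt 2 / 4 * \<eta> * 2 powr (- c)"
proof -
  define L where "L = ln (4 / \<eta>)"
  have sqrt2_le_2: "sqrt 2 \<le> (2::real)"
    using real_sqrt_le_mono[of 2 4] by simp
  have "(2::real) \<le> exp 1.85"
    by (rule order.trans[OF _ exp_ge_add_one_self]) simp
  then have "sqrt 2 \<le> exp (1.85::real)"
    using sqrt2_le_2 by linarith
  then have power_le: "(sqrt 2 * exp (- 1.85)) ^ k \<le> 1"
    by (intro power_le_one) (auto simp: exp_minus field_simps)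
  have exp_le_powr: "exp (- 1.85 * c) \<le> 2 powr (- c)"
  proof -
    have "ln 2 * c \<le> 1.85 * c"
      using ln_2_less_1 assms(1) by (intro mult_right_mono) auto
    then show ?thesis by (simp add: powr_def mult_ac)
  qed
  have exp_le_eta: "exp (- 1.175 * L) \<le> \<eta> / 4"
  proof -
    have "0 \<le> L"
      using assms by (simp add: L_def)
    then have "exp (- 1.175 * L) \<le> exp (- L)" by simp
    also have "exp (- L) = \<eta> / 4"
      using assms by (simp add: L_def exp_minus)
    finally show ?thesis .
  qed
  have "sqrt 2 ^ (k + 1) * exp (- (7.4 * (real k + c) + 4.7 * ln (4 / \<eta>)) / 4)
      = sqrt 2 * ((sqrt 2 * exp (- 1.85)) ^ k * (exp (- 1.85 * c) * exp (- 1.175 * L)))"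
    by (simp add: L_def exp_add[symmetric] exp_of_nat_mult[symmetric] field_simps)
  also have "\<dots> \<le> sqrt 2 * (1 * (2 powr (- c) * (\<eta> / 4)))"
    using power_le exp_le_powr exp_le_eta by (intro mult_left_mono mult_mono) auto
  finally show ?thesis
    by (simp add: mult_ac)
qed

lemma pow2_neg_nonneg: "0 \<le> pow2_neg x"
  by (simp add: pow2_neg_def)

lemma coding_length_sum_pow2_neg_le:
  assumes "coding_length cl"
  shows "(\<Sum>F\<in>UNIV. pow2_neg (cl F)) \<le> 2"
proof -
  have UNIV_eq: "(UNIV :: 'a set set) = insert {} {F. F \<noteq> {}}" by auto
  have "(\<Sum>F\<in>UNIV. pow2_neg (cl F)) = pow2_neg (cl {}) + (\<Sum>F\<in>{F::'a set. F \<noteq> {}}. pow2_neg (cl F))"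
    by (subst UNIV_eq) (subst sum.insert; auto)
  then show ?thesis
    using assms by (simp add: coding_length_def pow2_neg_def)
qed

lemma coding_complexity_attained:
  obtains F where "supp \<beta> \<subseteq> F" "coding_complexity cl \<beta> = coding_complexity_set cl F"
proof -
  have "coding_complexity cl \<beta> = Min (coding_complexity_set cl ` {F. supp \<beta> \<subseteq> F})"
    unfolding coding_complexity_def by (rule cInf_eq_Min) auto
  then show ?thesis
    using obtains_MIN[of "{F. supp \<beta> \<subseteq> F}" "coding_complexity_set cl"] that by auto
qed

lemma matrix_vector_mult_in_span_columns:
  fixes X :: "real ^ 'p ^ 'n"
  assumes "supp \<beta> \<subseteq> F"
  shows "X *v \<beta> \<in> span ((\<lambda>j. column j X) ` F)"
proof -
  have "X *v \<beta> = (\<Sum>j\<in>UNIV. \<beta> $ j *\<^sub>R column j X)"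
    by (simp add: matrix_mult_sum vec_eq_iff)
  also have "\<dots> \<in> span ((\<lambda>j. column j X) ` F)"
  proof (intro span_sum)
    fix j
    show "\<beta> $ j *\<^sub>R column j X \<in> span ((\<lambda>j. column j X) ` F)"
      using assms by (cases "\<beta> $ j = 0") (auto simp: supp_def span_zero intro: span_scale span_base)
  qed
  finally show ?thesis .
qed

lemma norm_power2_le_excess_risk_of_supp:
  fixes X :: "real ^ 'p ^ 'n" and B :: "(real ^ 'n) set"
  assumes B: "finite B" "pairwise orthogonal B" "\<And>w. w \<in> B \<Longrightarrow> norm w = 1"
    and span_B: "span B = span (insert \<mu> ((\<lambda>j. column j X) ` F))"
    and "supp \<beta> \<subseteq> F" "0 < a" "(\<Sum>w\<in>B. (w \<bullet> (y - \<mu>))\<^sup>2) \<le> r"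
  shows "(norm (X *v \<beta> - \<mu>))\<^sup>2 \<le> (1 + a) * ((norm (X *v \<beta> - y))\<^sup>2 - (norm (y - \<mu>))\<^sup>2) + (2 + a + 1 / a) * r"
proof -
  have "X *v \<beta> \<in> span (insert \<mu> ((\<lambda>j. column j X) ` F))"
    using matrix_vector_mult_in_span_columns[OF \<open>supp \<beta> \<subseteq> F\<close>] span_mono[OF subset_insertI] by blast
  then have "X *v \<beta> - \<mu> \<in> span B"
    unfolding span_B by (rule span_diff) (auto intro: span_base)
  from norm_power2_le_excess_risk[OF B this \<open>0 < a\<close>, where e = "y - \<mu>"]
  have "(norm (X *v \<beta> - \<mu>))\<^sup>2 \<le> (1 + a) * ((norm (X *v \<beta> - y))\<^sup>2 - (norm (y - \<mu>))\<^sup>2)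
      + (2 + a + 1 / a) * (\<Sum>w\<in>B. (w \<bullet> (y - \<mu>))\<^sup>2)"
    by simp
  also have "\<dots> \<le> (1 + a) * ((norm (X *v \<beta> - y))\<^sup>2 - (norm (y - \<mu>))\<^sup>2) + (2 + a + 1 / a) * r"
    using assms(7) \<open>0 < a\<close> by (simp add: add_pos_pos)
  finally show ?thesis .
qed

lemma exists_orthonormal_bases_span:
  fixes G :: "'i \<Rightarrow> 'a::euclidean_space set"
  assumes "\<And>i. finite (G i)"
  obtains B where "\<And>i. finite (B i)" "\<And>i. pairwise orthogonal (B i)" "\<And>i w. w \<in> B i \<Longrightarrow> norm w = 1"
    "\<And>i. span (B i) = span (G i)" "\<And>i. card (B i) \<le> card (G i)"
proof -
  have "\<forall>i. \<exists>B. pairwise orthogonal B \<and> (\<forall>w\<in>B. norm w = 1) \<and> independent B \<and>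
      card B = dim (span (G i)) \<and> span B = span (G i)"
    using orthonormal_basis_subspace[OF subspace_span] by metis
  then obtain B where B: "\<forall>i. pairwise orthogonal (B i) \<and> (\<forall>w\<in>B i. norm w = 1) \<and> independent (B i) \<and>
      card (B i) = dim (span (G i)) \<and> span (B i) = span (G i)"
    by (auto dest: choice)
  have "dim (span (G i)) \<le> card (G i)" for i
    using dim_le_card[OF subset_refl assms] by simp
  then show ?thesis
    using B by (intro that[of B]) (auto intro: finiteI_independent)
qed

lemma exists_orthonormal_bases_column_spans:
  fixes X :: "real ^ 'p ^ 'n" and \<mu> :: "real ^ 'n"
  obtains B where "\<And>F. finite (B F)" "\<And>F. pairwise orthogonal (B F)" "\<And>F w. w \<in> B F \<Longrightarrow> norm w = 1"
    "\<And>F. span (B F) = span (insert \<mu> ((\<lambda>j. column j X) ` F))" "\<And>F. card (B F) \<le> card F + 1"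
proof -
  obtain B where B: "\<And>F. finite (B F)" "\<And>F. pairwise orthogonal (B F)" "\<And>F w. w \<in> B F \<Longrightarrow> norm w = 1"
      "\<And>F. span (B F) = span (insert \<mu> ((\<lambda>j. column j X) ` F))"
      "\<And>F. card (B F) \<le> card (insert \<mu> ((\<lambda>j. column j X) ` F))"
    by (rule exists_orthonormal_bases_span[of "\<lambda>F. insert \<mu> ((\<lambda>j. column j X) ` F)"]) auto
  have "card (insert \<mu> ((\<lambda>j. column j X) ` F)) \<le> card F + 1" for F
    by (rule card_insert_le_m1) (simp_all add: card_image_le)
  then show ?thesis
    using B order.trans by (intro that[of B]) blast+
qed

text \<open>For \<open>cl F = \<infinity>\<close> this is a junk value (\<open>real_of_ereal \<infinity> = 0\<close>); it is only used when
  \<open>cl F\<close> is finite or \<open>\<sigma> = 0\<close>.\<close>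

definition risk_threshold :: "real \<Rightarrow> ('p::finite set \<Rightarrow> ereal) \<Rightarrow> 'p set \<Rightarrow> real" where
  "risk_threshold \<eta> cl F = 7.4 * (real (card F) + real_of_ereal (cl F)) + 4.7 * ln (4 / \<eta>)"

context subgaussian_vector
begin

lemma measure_sum_inner_power2_gt_risk_threshold_le:
  fixes B :: "(real ^ 'n) set" and cl :: "'p::finite set \<Rightarrow> ereal"
  assumes B: "finite B" "pairwise orthogonal B" "\<And>w. w \<in> B \<Longrightarrow> norm w = 1"
    and "card B \<le> card F + 1" "coding_length cl" "0 < \<eta>" "\<eta> < 1" "\<sigma> = 0 \<or> cl F \<noteq> \<infinity>"
  shows "measure M {\<omega>\<in>space M. \<sigma>\<^sup>2 * risk_threshold \<eta> cl F < (\<Sum>w\<in>B. (w \<bullet> e \<omega>)\<^sup>2)}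
    \<le> sqrt 2 / 4 * \<eta> * pow2_neg (cl F)"
  (is "measure M ?A \<le> _")
proof (cases "\<sigma> = 0")
  case True
  have "AE \<omega> in M. \<omega> \<notin> ?A"
    using AE_sum_inner_power2_eq_0[OF B True] by (rule eventually_mono) (auto simp: True)
  then have "measure M ?A = 0"
    by (simp add: AE_iff_measurable[OF _ refl] measure_def)
  then show ?thesis
    using \<open>0 < \<eta>\<close> pow2_neg_nonneg by simp
next
  case False
  then have cl_finite: "cl F \<noteq> \<infinity>"
    using assms(8) by simp
  have cl_nonneg: "0 \<le> cl F"
    using \<open>coding_length cl\<close> by (simp add: coding_length_def)
  have "measure M ?A \<le> sqrt 2 ^ card B * exp (- risk_threshold \<eta> cl F / 4)"
    using emeasure_sum_inner_power2_gt_le[OF B False]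
    by (simp add: emeasure_eq_measure ennreal_le_iff)
  also have "\<dots> \<le> sqrt 2 ^ (card F + 1) * exp (- risk_threshold \<eta> cl F / 4)"
    using assms(4) by (intro mult_right_mono power_increasing) auto
  also have "\<dots> \<le> sqrt 2 / 4 * \<eta> * 2 powr (- real_of_ereal (cl F))"
    unfolding risk_threshold_def using cl_nonneg assms(6,7)
    by (intro sqrt2_power_mult_exp_le) (auto simp: real_of_ereal_pos)
  finally show ?thesis
    using cl_finite by (simp add: pow2_neg_def)
qed

lemma exists_event_sum_inner_power2_le_risk_threshold:
  fixes B :: "'p::finite set \<Rightarrow> (real ^ 'n) set" and cl :: "'p set \<Rightarrow> ereal"
  assumes B: "\<And>F. finite (B F)" "\<And>F. pairwise orthogonal (B F)" "\<And>F w. w \<in> B F \<Longrightarrow> norm w = 1"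
      "\<And>F. card (B F) \<le> card F + 1"
    and "coding_length cl" "0 < \<eta>" "\<eta> < 1"
  shows "\<exists>A\<in>sets M. 1 - \<eta> \<le> measure M A \<and>
    (\<forall>\<omega>\<in>A. \<forall>F. \<sigma> = 0 \<or> cl F \<noteq> \<infinity> \<longrightarrow> (\<Sum>w\<in>B F. (w \<bullet> e \<omega>)\<^sup>2) \<le> \<sigma>\<^sup>2 * risk_threshold \<eta> cl F)"
proof -
  define \<F> where "\<F> = {F. \<sigma> = 0 \<or> cl F \<noteq> \<infinity>}"
  define bad where "bad F = {\<omega>\<in>space M. \<sigma>\<^sup>2 * risk_threshold \<eta> cl F < (\<Sum>w\<in>B F. (w \<bullet> e \<omega>)\<^sup>2)}" for F
  have bad_sets: "bad F \<in> sets M" for F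
    unfolding bad_def by measurable
  have "measure M (\<Union>F\<in>\<F>. bad F) \<le> (\<Sum>F\<in>\<F>. measure M (bad F))"
    using bad_sets by (intro measure_UNION_le) auto
  also have "\<dots> \<le> (\<Sum>F\<in>\<F>. sqrt 2 / 4 * \<eta> * pow2_neg (cl F))"
  proof (rule sum_mono)
    fix F assume "F \<in> \<F>"
    then show "measure M (bad F) \<le> sqrt 2 / 4 * \<eta> * pow2_neg (cl F)"
      unfolding bad_def \<F>_def
      using measure_sum_inner_power2_gt_risk_threshold_le[OF B(1-4) assms(5-7)] by simp
  qed
  also have "\<dots> = sqrt 2 / 4 * \<eta> * (\<Sum>F\<in>\<F>. pow2_neg (cl F))"
    by (simp add: sum_distrib_left)
  also have "\<dots> \<le> sqrt 2 / 4 * \<eta> * (\<Sum>F\<in>UNIV. pow2_neg (cl F))"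
    using \<open>0 < \<eta>\<close> by (intro mult_left_mono sum_mono2 pow2_neg_nonneg) auto
  also have "\<dots> \<le> sqrt 2 / 4 * \<eta> * 2"
    using \<open>0 < \<eta>\<close> coding_length_sum_pow2_neg_le[OF \<open>coding_length cl\<close>] by (intro mult_left_mono) auto
  also have "\<dots> \<le> \<eta>"
    using real_sqrt_le_mono[of 2 4] \<open>0 < \<eta>\<close> by simp
  finally have "measure M (\<Union>F\<in>\<F>. bad F) \<le> \<eta>" .
  moreover have bad_union_sets: "(\<Union>F\<in>\<F>. bad F) \<in> sets M"
    using bad_sets by (intro sets.finite_UN) auto
  ultimately have "1 - \<eta> \<le> measure M (space M - (\<Union>F\<in>\<F>. bad F))"
    by (simp add: prob_compl)
  moreover have "(\<Sum>w\<in>B F. (w \<bullet> e \<omega>)\<^sup>2) \<le> \<sigma>\<^sup>2 * risk_threshold \<eta> cl F"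
    if "\<omega> \<in> space M - (\<Union>F\<in>\<F>. bad F)" "\<sigma> = 0 \<or> cl F \<noteq> \<infinity>" for \<omega> F
    using that by (auto simp: \<F>_def bad_def not_less)
  ultimately show ?thesis
    using bad_union_sets by blast
qed

end

lemma ereal_le_coding_complexity_bound:
  fixes N R K L :: real
  assumes "coding_length cl" "0 \<le> K"
    and bound: "\<And>F. supp \<beta> \<subseteq> F \<Longrightarrow> K = 0 \<or> cl F \<noteq> \<infinity> \<Longrightarrow>
      N \<le> R + K * (7.4 * (real (card F) + real_of_ereal (cl F)) + L)"
  shows "ereal N \<le> ereal R + ereal K * (ereal 7.4 * coding_complexity cl \<beta> + ereal L)"
proof -
  obtain F where F: "supp \<beta> \<subseteq> F" and c_eq: "coding_complexity cl \<beta> = ereal (card F) + cl F"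
    using coding_complexity_attained unfolding coding_complexity_set_def by metis
  have "0 \<le> cl F"
    using \<open>coding_length cl\<close> by (simp add: coding_length_def)
  then consider "cl F = \<infinity>" "K = 0" | "cl F = \<infinity>" "K \<noteq> 0" | r where "cl F = ereal r"
    by (cases "cl F") auto
  then show ?thesis
  proof cases
    case 1
    then show ?thesis
      using bound[OF F] by (simp add: zero_ereal_def[symmetric])
  next
    case 2
    then show ?thesis
      using \<open>0 \<le> K\<close> by (simp add: c_eq)
  next
    case 3
    then show ?thesis
      using bound[OF F] by (simp add: c_eq)
  qed
qed

lemma ereal_norm_power2_le_excess_risk_coding_complexity:
  fixes X :: "real ^ 'p ^ 'n" and B :: "'p set \<Rightarrow> (real ^ 'n) set"
  assumes B: "\<And>F. finite (B F)" "\<And>F. pairwise orthogonal (B F)" "\<And>F w. w \<in> B F \<Longrightarrow> norm w = 1"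
      "\<And>F. span (B F) = span (insert \<mu> ((\<lambda>j. column j X) ` F))"
    and "coding_length cl" "0 < a"
    and projection_le: "\<And>F. \<sigma> = 0 \<or> cl F \<noteq> \<infinity> \<Longrightarrow>
      (\<Sum>w\<in>B F. (w \<bullet> (y - \<mu>))\<^sup>2) \<le> \<sigma>\<^sup>2 * risk_threshold \<eta> cl F"
  shows "ereal ((norm (X *v \<beta> - \<mu>))\<^sup>2) \<le> ereal ((1 + a) * ((norm (X *v \<beta> - y))\<^sup>2 - (norm (y - \<mu>))\<^sup>2))
    + ereal ((2 + a + 1 / a) * \<sigma>\<^sup>2) * (ereal 7.4 * coding_complexity cl \<beta> + ereal (4.7 * ln (4 / \<eta>)))"
proof (rule ereal_le_coding_complexity_bound[OF \<open>coding_length cl\<close>])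
  have "0 < 2 + a + 1 / a"
    using \<open>0 < a\<close> by (simp add: add_pos_pos)
  then show "0 \<le> (2 + a + 1 / a) * \<sigma>\<^sup>2"
    by simp
  fix F assume "supp \<beta> \<subseteq> F" and "(2 + a + 1 / a) * \<sigma>\<^sup>2 = 0 \<or> cl F \<noteq> \<infinity>"
  with \<open>0 < 2 + a + 1 / a\<close> have "(\<Sum>w\<in>B F. (w \<bullet> (y - \<mu>))\<^sup>2) \<le> \<sigma>\<^sup>2 * risk_threshold \<eta> cl F"
    by (intro projection_le) auto
  from norm_power2_le_excess_risk_of_supp[OF B \<open>supp \<beta> \<subseteq> F\<close> \<open>0 < a\<close> this]
  show "(norm (X *v \<beta> - \<mu>))\<^sup>2 \<le> (1 + a) * ((norm (X *v \<beta> - y))\<^sup>2 - (norm (y - \<mu>))\<^sup>2)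
      + (2 + a + 1 / a) * \<sigma>\<^sup>2 * (7.4 * (real (card F) + real_of_ereal (cl F)) + 4.7 * ln (4 / \<eta>))"
    by (simp add: risk_threshold_def mult_ac)
qed

lemma subgaussian_vector_centered:
  fixes M :: "'w measure" and y :: "'w \<Rightarrow> real ^ 'n"
  defines "\<mu> \<equiv> \<chi> i. prob_space.expectation M (\<lambda>\<omega>. y \<omega> $ i)"
  assumes "prob_space M"
    and indep: "prob_space.indep_vars M (\<lambda>_. borel) (\<lambda>i \<omega>. y \<omega> $ i) UNIV"
    and "\<And>i t. integrable M (\<lambda>\<omega>. exp (t * (y \<omega> $ i - prob_space.expectation M (\<lambda>\<omega>. y \<omega> $ i))))"
    and "\<And>i t. prob_space.expectation M
                 (\<lambda>\<omega>. exp (t * (y \<omega> $ i - prob_space.expectation M (\<lambda>\<omega>. y \<omega> $ i))))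
               \<le> exp (\<sigma>\<^sup>2 * t\<^sup>2 / 2)"
  shows "subgaussian_vector M (\<lambda>\<omega>. y \<omega> - \<mu>) \<sigma>"
proof -
  interpret prob_space M by fact
  show ?thesis
  proof
    show "indep_vars (\<lambda>_. borel) (\<lambda>i \<omega>. (y \<omega> - \<mu>) $ i) UNIV"
      using indep_vars_compose2[OF indep, of "\<lambda>i x. x - \<mu> $ i"] by simp
    show "(\<integral>\<^sup>+\<omega>. ennreal (exp (t * (y \<omega> - \<mu>) $ i)) \<partial>M) \<le> ennreal (exp (\<sigma>\<^sup>2 * t\<^sup>2 / 2))" for i t
      using assms(4,5)[of t i] by (simp add: \<mu>_def nn_integral_eq_integral ennreal_leI)
  qed
qed

theorem lemma5:
  fixes M :: "'w measure"
    and X :: "real ^ 'p ^ 'n"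
    and y :: "'w \<Rightarrow> real ^ 'n"
    and \<sigma> \<eta> :: real
    and cl :: "'p::finite set \<Rightarrow> ereal"
  assumes "prob_space M"
    and "prob_space.indep_vars M (\<lambda>_. borel) (\<lambda>i \<omega>. y \<omega> $ i) UNIV"
    and "\<And>i. integrable M (\<lambda>\<omega>. y \<omega> $ i)"
    and "\<sigma> \<ge> 0"
    and "\<And>i t. integrable M (\<lambda>\<omega>. exp (t * (y \<omega> $ i - prob_space.expectation M (\<lambda>\<omega>. y \<omega> $ i))))"
    and "\<And>i t. prob_space.expectation M
                 (\<lambda>\<omega>. exp (t * (y \<omega> $ i - prob_space.expectation M (\<lambda>\<omega>. y \<omega> $ i))))
               \<le> exp (\<sigma>^2 * t^2 / 2)"
    and "coding_length cl"
    and "0 < \<eta>" and "\<eta> < 1"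
  shows "\<exists>A\<in>sets M. measure M A \<ge> 1 - \<eta> \<and>
    (\<forall>\<omega>\<in>A. \<forall>\<beta>::real ^ 'p. \<forall>a::real. a > 0 \<longrightarrow>
       (let Ey = (\<chi> i. prob_space.expectation M (\<lambda>\<omega>. y \<omega> $ i)) in
        ereal ((norm (X *v \<beta> - Ey))^2)
        \<le> ereal ((1 + a) * ((norm (X *v \<beta> - y \<omega>))^2 - (norm (y \<omega> - Ey))^2))
           + ereal ((2 + a + 1 / a) * \<sigma>^2)
             * (ereal 7.4 * coding_complexity cl \<beta> + ereal (4.7 * ln (4 / \<eta>)))))"
proof -
  define \<mu> where "\<mu> = (\<chi> i. prob_space.expectation M (\<lambda>\<omega>. y \<omega> $ i))"
  define e where "e = (\<lambda>\<omega>. y \<omega> - \<mu>)"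
  interpret subgaussian_vector M e \<sigma>
    unfolding \<mu>_def e_def using assms(1,2,5,6) by (rule subgaussian_vector_centered)
  obtain B where B: "\<And>F. finite (B F)" "\<And>F. pairwise orthogonal (B F)" "\<And>F w. w \<in> B F \<Longrightarrow> norm w = 1"
      "\<And>F. span (B F) = span (insert \<mu> ((\<lambda>j. column j X) ` F))" "\<And>F. card (B F) \<le> card F + 1"
    by (rule exists_orthonormal_bases_column_spans) blast
  obtain A where "A \<in> sets M" and A: "1 - \<eta> \<le> measure M A \<and>
      (\<forall>\<omega>\<in>A. \<forall>F. \<sigma> = 0 \<or> cl F \<noteq> \<infinity> \<longrightarrow> (\<Sum>w\<in>B F. (w \<bullet> e \<omega>)\<^sup>2) \<le> \<sigma>\<^sup>2 * risk_threshold \<eta> cl F)"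
    using exists_event_sum_inner_power2_le_risk_threshold[OF B(1-3,5) assms(7-9)] by (rule bexE)
  show ?thesis
  proof (intro bexI[OF _ \<open>A \<in> sets M\<close>] conjI ballI allI impI)
    show "1 - \<eta> \<le> measure M A"
      using A by blast
    fix \<omega> \<beta> and a :: real assume "\<omega> \<in> A" "0 < a"
    then show "let Ey = \<chi> i. prob_space.expectation M (\<lambda>\<omega>. y \<omega> $ i) in
        ereal ((norm (X *v \<beta> - Ey))\<^sup>2) \<le> ereal ((1 + a) * ((norm (X *v \<beta> - y \<omega>))\<^sup>2 - (norm (y \<omega> - Ey))\<^sup>2))
          + ereal ((2 + a + 1 / a) * \<sigma>\<^sup>2) * (ereal 7.4 * coding_complexity cl \<beta> + ereal (4.7 * ln (4 / \<eta>)))"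
      unfolding Let_def \<mu>_def[symmetric] using A
      by (intro ereal_norm_power2_le_excess_risk_coding_complexity[OF B(1-4) assms(7)]) (auto simp: e_def)
  qed
qed

end
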